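(* For every positive integer $n\neq 2$, there is no continuous bijection from $\mathbb{R}^n$ onto $\mathbb{R}^2$.
   Context: $\mathbb{R}^n$ and $\mathbb{R}^2$ carry their usual Euclidean topologies. *)

theory Defs
  imports "HOL-Analysis.Analysis"
begin

end

theory Submission
  imports Defs
begin

(* A continuous bijection f from R^n onto R^2 would in particular be a continuous
   injection, so we argue by the dimension n.
   - If n > 2, invariance of dimension forbids any continuous injection R^n -> R^2.
   - If n = 1 < 2, injectivity alone is not contradictory; surjectivity is. We show
     that a continuous injection from a lower-dimensional Euclidean space has an image
     with empty interior:  on each compact ball the inverse of f is continuous, so an
     interior point of f(ball) would give a continuous injection from an open subset of
     the bigger space into the smaller one, contradicting invariance of dimension.
     The whole image is the countable union of these closed, nowhere dense images of
     balls, hence has empty interior by the Baire category theorem.  A surjection onto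
     R^2 has image R^2, whose interior is not empty. *)

text \<open>The continuous injective image of a compact set in a Euclidean space of strictly
  larger dimension is nowhere dense: its inverse is continuous, so an open ball inside
  the image would embed into the smaller space.\<close>

lemma interior_compact_image_lower_dim:
  fixes f :: "'a::euclidean_space \<Rightarrow> 'b::euclidean_space"
  assumes dim: "DIM('a) < DIM('b)" and "compact K"
    and contf: "continuous_on K f" and injf: "inj_on f K"
  shows "interior (f ` K) = {}"
proof (rule ccontr)
  assume "interior (f ` K) \<noteq> {}"
  then obtain y e where "e > 0" and ball: "ball y e \<subseteq> f ` K"
    by (metis ex_in_conv mem_interior)
  define g where "g = the_inv_into K f"
  have "continuous_on (f ` K) g"
    unfolding g_def using contf \<open>compact K\<close> injf by (rule continuous_on_inv_into)
  then have "continuous_on (ball y e) g"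
    using ball continuous_on_subset by blast
  moreover have "inj_on g (ball y e)"
    using inj_on_subset[OF inj_on_the_inv_into[OF injf] ball] by (simp add: g_def)
  ultimately have "DIM('b) \<le> DIM('a)"
    using invariance_of_dimension[of "ball y e" g] \<open>e > 0\<close> by simp
  with dim show False by simp
qed

text \<open>Baire category: the image of the whole space under a continuous injection into a
  Euclidean space of larger dimension has empty interior, being the countable union of
  the closed, nowhere dense images of the balls of integer radius.\<close>

lemma interior_range_lower_dim:
  fixes f :: "'a::euclidean_space \<Rightarrow> 'b::euclidean_space"
  assumes dim: "DIM('a) < DIM('b)"
    and contf: "continuous_on UNIV f" and injf: "inj f"
  shows "interior (range f) = {}"
proof -
  define \<G> where "\<G> = range (\<lambda>k::nat. f ` cball 0 (real k))"
  have closed_nowhere_dense: "closed T \<and> interior T = {}" if "T \<in> \<G>" for T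
  proof -
    obtain k :: nat where T: "T = f ` cball 0 (real k)"
      using \<open>T \<in> \<G>\<close> by (auto simp: \<G>_def)
    have cont_ball: "continuous_on (cball 0 (real k)) f"
      using contf continuous_on_subset by blast
    have "compact T"
      unfolding T by (rule compact_continuous_image[OF cont_ball compact_cball])
    moreover have "interior T = {}"
      unfolding T using interior_compact_image_lower_dim[OF dim compact_cball cont_ball]
        injf by (simp add: inj_on_subset)
    ultimately show ?thesis by (simp add: compact_imp_closed)
  qed
  have range_eq: "range f = \<Union>\<G>"
  proof
    show "range f \<subseteq> \<Union>\<G>"
    proof
      fix y assume "y \<in> range f"
      then obtain x where "y = f x" by blast
      obtain k :: nat where "norm x \<le> real k" using real_arch_simple by blast
      then have "x \<in> cball 0 (real k)" by simp
      then show "y \<in> \<Union>\<G>" unfolding \<G>_def \<open>y = f x\<close> by blast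
    qed
  qed (auto simp: \<G>_def)
  have "euclidean interior_of \<Union>\<G> = {}"
    using closed_nowhere_dense
    by (intro Baire_category_alt) (auto simp: completely_metrizable_space_euclidean \<G>_def)
  then show ?thesis
    by (simp add: range_eq interior_of_openin)
qed

theorem theorem4:
  fixes f :: "real ^ 'n \<Rightarrow> real ^ 2"
  assumes "CARD('n) \<noteq> 2"
  shows "\<not> (continuous_on UNIV f \<and> bij f)"
proof
  assume "continuous_on UNIV f \<and> bij f"
  then have contf: "continuous_on UNIV f" and injf: "inj f" and surjf: "surj f"
    by (auto simp: bij_def)
  consider "CARD('n) < 2" | "CARD('n) > 2"
    using assms by linarith
  then show False
  proof cases
    case 1
    then have "interior (range f) = {}"
      using interior_range_lower_dim[OF _ contf injf] by simp
    with surjf show False by simp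
  next
    case 2
    then show False
      using invariance_of_dimension[OF contf open_UNIV] injf by simp
  qed
qed

end
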